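(* Let $q$ be an odd prime power, $d\ge 2$ an even integer, and $A\subset\mathbb F_q^d$. Let $\mathcal{SQ}(A)$ and $\mathcal{ZR}(A)$ be the number of pairs $(x,y)\in A\times A$ with $\eta(\|x-y\|)=1$ and with $\eta(\|x-y\|)=0$, respectively. Let $\Omega^+(A)=\sum_{m:\ \eta(\|m\|)=1}|\widehat A(m)|^2$ and $\Omega^-(A)=\sum_{m:\ \eta(\|m\|)=-1}|\widehat A(m)|^2$ (sums over $m\in\mathbb F_q^d$). Then \begin{enumerate} \item $$\mathcal{SQ}(A)+\frac{\mathcal{ZR}(A)}{2}=\frac{|A|^2}{2}+\frac{q^{d-1}G_1^{d+2}}{2}\Omega^+(A)-\frac{q^{d-1}G_1^{d+2}}{2}\Omega^-(A).$$ \item In particular, if $d\equiv 2\pmod 4$, then $$\mathcal{SQ}(A)+\frac{\mathcal{ZR}(A)}{2}=\frac{|A|^2}{2}+\frac{q^{\frac{3d}{2}}}{2}\Omega^+(A)-\frac{q^{\frac{3d}{2}}}{2}\Omega^-(A).$$ \end{enumerate}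
   Context: For $x\in\mathbb F_q^d$, $\|x\|=x_1^2+\cdots+x_d^2$. $\eta$ is the quadratic character of $\mathbb F_q$ with $\eta(0)=0$. $\chi$ is the canonical nontrivial additive character of $\mathbb F_q$; $G_1=\sum_{s\in\mathbb F_q^*}\eta(s)\chi(s)$ is the Gauss sum. For $A\subset\mathbb F_q^d$, $\widehat{A}(m)=q^{-d}\sum_{x\in A}\chi(-m\cdot x)$ is the Fourier transform of the indicator function of $A$. *)

theory Defs
  imports "HOL-Analysis.Analysis"
begin

text \<open>Finite field F_q modelled by a type 'a of class field and finite; q = CARD('a),
  p = CHAR('a), q = p^r.\<close>

definition fdeg :: "'a::{field,finite} itself \<Rightarrow> nat" where
  "fdeg T = (THE r. CHAR('a) ^ r = CARD('a))"

definition ftrace :: "'a::{field,finite} \<Rightarrow> 'a" where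
  "ftrace x = (\<Sum>i<fdeg TYPE('a). x ^ (CHAR('a) ^ i))"

definition addchar :: "'a::{field,finite} \<Rightarrow> complex" where
  "addchar x = (let k = (THE k::nat. k < CHAR('a) \<and> of_nat k = ftrace x)
                in cis (2 * pi * real k / real CHAR('a)))"

definition qchar :: "'a::{field,finite} \<Rightarrow> int" where
  "qchar x = (if x = 0 then 0 else if (\<exists>y. y ^ 2 = x) then 1 else -1)"

definition gauss1 :: "'a::{field,finite} itself \<Rightarrow> complex" where
  "gauss1 T = (\<Sum>s\<in>UNIV - {0::'a}. of_int (qchar s) * addchar s)"

definition fnorm :: "'a::{field,finite} ^ 'n \<Rightarrow> 'a" where
  "fnorm x = (\<Sum>i\<in>UNIV. (x $ i) ^ 2)"

definition fdot :: "'a::{field,finite} ^ 'n \<Rightarrow> 'a ^ 'n \<Rightarrow> 'a" where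
  "fdot m x = (\<Sum>i\<in>UNIV. m $ i * x $ i)"

definition fourier :: "('a::{field,finite} ^ 'n) set \<Rightarrow> 'a ^ 'n \<Rightarrow> complex" where
  "fourier A m = (\<Sum>x\<in>A. addchar (- fdot m x)) / of_nat CARD('a) ^ CARD('n)"

definition SQ :: "('a::{field,finite} ^ 'n) set \<Rightarrow> nat" where
  "SQ A = card {(x, y). x \<in> A \<and> y \<in> A \<and> qchar (fnorm (x - y)) = 1}"

definition ZR :: "('a::{field,finite} ^ 'n) set \<Rightarrow> nat" where
  "ZR A = card {(x, y). x \<in> A \<and> y \<in> A \<and> qchar (fnorm (x - y)) = 0}"

definition OmegaP :: "('a::{field,finite} ^ 'n) set \<Rightarrow> real" where
  "OmegaP A = (\<Sum>m | qchar (fnorm m) = 1. (cmod (fourier A m))\<^sup>2)"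

definition OmegaM :: "('a::{field,finite} ^ 'n) set \<Rightarrow> real" where
  "OmegaM A = (\<Sum>m | qchar (fnorm m) = -1. (cmod (fourier A m))\<^sup>2)"

end

(* Writing Omega^+ - Omega^- = sum_m eta(|m|) |A^(m)|^2 and expanding |A^(m)|^2 as a double
   sum over A x A reduces everything to the character sum
     sum_m eta(|m|) chi(m . z) = G^d eta(-1) eta(|z|)        (d even).
   Multiplying by G and writing eta(|m|) G = sum_s eta(s) chi(s |m|), the sum over m factors
   into d one-dimensional quadratic Gauss sums chi(-z_i^2/4s) eta(s) G; as d is even, the
   remaining sum over s is again a twisted Gauss sum.  On the counting side each pair (x, y)
   contributes (1 + eta(|x - y|))/2 to SQ + ZR/2, and G^2 = eta(-1) q turns the powers of G
   into the constants of the statement.  Since chi is defined through the absolute trace, one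
   first needs q = p^r and that the trace is a nonvanishing map into the prime field. *)

theory Submission
  imports Defs "HOL-Computational_Algebra.Polynomial" "HOL-Number_Theory.Cong"
begin

lemma prime_CHAR_finite_field: "prime CHAR('a::{field,finite})"
  by (rule prime_CHAR_semidom) (rule finite_imp_CHAR_pos, simp)

lemma CHAR_finite_field_gt_1: "CHAR('a::{field,finite}) > 1"
  using prime_CHAR_finite_field prime_gt_1_nat by blast

lemma of_nat_eq_iff_below_CHAR:
  assumes "m < CHAR('a::semiring_1_cancel)" "n < CHAR('a)"
  shows "(of_nat m :: 'a) = of_nat n \<longleftrightarrow> m = n"
  using assms cong_less_modulus_unique_nat by (auto simp: of_nat_eq_iff_cong_CHAR)

lemma of_nat_mod_CHAR: "(of_nat (n mod CHAR('a)) :: 'a::semiring_1_cancel) = of_nat n"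
  by (simp add: of_nat_eq_iff_cong_CHAR)

lemma power_card_minus_1_finite_field:
  assumes "(x :: 'a::{field,finite}) \<noteq> 0"
  shows "x ^ (CARD('a) - 1) = 1"
proof -
  let ?U = "UNIV - {0 :: 'a}"
  have card_U: "card ?U = CARD('a) - 1" by (simp add: card_Diff_singleton)
  have "(\<Prod>y\<in>?U. x * y) = (\<Prod>y\<in>?U. y)"
    by (rule prod.reindex_bij_witness[of _ "\<lambda>y. y / x" "\<lambda>y. x * y"]) (use assms in auto)
  moreover have "(\<Prod>y\<in>?U. x * y) = x ^ (CARD('a) - 1) * (\<Prod>y\<in>?U. y)"
    by (simp add: prod.distrib card_U)
  moreover have "(\<Prod>y\<in>?U. y) \<noteq> 0" by simp
  ultimately show ?thesis by simp
qed

lemma power_card_finite_field: "(x :: 'a::{field,finite}) ^ CARD('a) = x"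
proof (cases "x = 0")
  case False
  then show ?thesis
    using power_minus_mult[of "CARD('a)" x] power_card_minus_1_finite_field[OF False] by simp
qed simp

lemma of_nat_mult_mem_additive_submonoid:
  assumes "0 \<in> S" "\<And>x y. x \<in> S \<Longrightarrow> y \<in> S \<Longrightarrow> x + y \<in> S" "s \<in> S"
  shows "of_nat n * s \<in> S"
  using assms by (induction n) (auto simp: distrib_right)

lemma uminus_mem_additive_submonoid:
  fixes S :: "'a::{field,finite} set"
  assumes "0 \<in> S" "\<And>x y. x \<in> S \<Longrightarrow> y \<in> S \<Longrightarrow> x + y \<in> S" "s \<in> S"
  shows "- s \<in> S"
proof -
  have "of_nat (CHAR('a) - 1) * s + s = of_nat CHAR('a) * s"
    using CHAR_finite_field_gt_1[where 'a='a] by (simp add: algebra_simps)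
  then have "of_nat (CHAR('a) - 1) * s = - s" by (simp add: eq_neg_iff_add_eq_0)
  then show ?thesis using of_nat_mult_mem_additive_submonoid[OF assms] by metis
qed

lemma mem_additive_submonoid_if_of_nat_mult_mem:
  fixes S :: "'a::{field,finite} set"
  assumes "0 \<in> S" "\<And>x y. x \<in> S \<Longrightarrow> y \<in> S \<Longrightarrow> x + y \<in> S"
    and "of_nat c * a \<in> S" "0 < c" "c < CHAR('a)"
  shows "a \<in> S"
proof -
  have "coprime c CHAR('a)"
    using assms(4,5) prime_CHAR_finite_field[where 'a='a]
    by (metis coprime_commute nat_dvd_not_less prime_imp_coprime_nat)
  then obtain e where "[c * e = 1] (mod CHAR('a))" by (metis One_nat_def cong_solve_coprime_nat)
  then have "(of_nat e * of_nat c :: 'a) = 1"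
    by (metis of_nat_1 of_nat_eq_iff_cong_CHAR of_nat_mult mult.commute)
  moreover have "of_nat e * (of_nat c * a) \<in> S"
    by (rule of_nat_mult_mem_additive_submonoid[OF assms(1,2,3)])
  ultimately show ?thesis by (simp add: mult.assoc[symmetric])
qed

lemma additive_submonoid_cosets_disjoint:
  fixes S :: "'a::{field,finite} set"
  assumes zero: "0 \<in> S" and add: "\<And>x y. x \<in> S \<Longrightarrow> y \<in> S \<Longrightarrow> x + y \<in> S" and "a \<notin> S"
    and "s \<in> S" "t \<in> S" "i < CHAR('a)" "j < CHAR('a)" "s + of_nat j * a = t + of_nat i * a"
  shows "i = j"
proof -
  have "i = j"
    if "s \<in> S" "t \<in> S" "i < j" "j < CHAR('a)" "s + of_nat j * a = t + of_nat i * a" for s t i j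
  proof -
    have "of_nat (j - i) * a = of_nat j * a - of_nat i * a"
      using \<open>i < j\<close> by (simp add: left_diff_distrib)
    also have "\<dots> = t + - s"
      using that(5) by (simp add: algebra_simps)
    finally have "of_nat (j - i) * a \<in> S"
      using add[OF \<open>t \<in> S\<close> uminus_mem_additive_submonoid[OF zero add \<open>s \<in> S\<close>]] by metis
    with mem_additive_submonoid_if_of_nat_mult_mem[OF zero add] show ?thesis
      using \<open>a \<notin> S\<close> that(3,4) by fastforce
  qed
  then show ?thesis using assms(4-8) by (metis linorder_neqE_nat)
qed

lemma card_additive_submonoid_insert:
  fixes S :: "'a::{field,finite} set"
  assumes zero: "0 \<in> S" and add: "\<And>x y. x \<in> S \<Longrightarrow> y \<in> S \<Longrightarrow> x + y \<in> S" and "a \<notin> S"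
  defines "S' \<equiv> (\<lambda>(s, j). s + of_nat j * a) ` (S \<times> {..<CHAR('a)})"
  shows "0 \<in> S'" "\<And>x y. x \<in> S' \<Longrightarrow> y \<in> S' \<Longrightarrow> x + y \<in> S'" "S \<subset> S'"
    "card S' = CHAR('a) * card S"
proof -
  define p where "p = CHAR('a)"
  have mem: "s + of_nat j * a \<in> S'" if "s \<in> S" for s j
  proof -
    have "s + of_nat j * a = s + of_nat (j mod p) * a" by (simp add: p_def of_nat_mod_CHAR)
    then show ?thesis
      using that CHAR_finite_field_gt_1[where 'a='a] unfolding S'_def p_def[symmetric] by force
  qed
  then have S'_eq: "S' = {s + of_nat j * a | s j. s \<in> S}"
    unfolding S'_def by auto
  show "0 \<in> S'" using mem[OF zero, of 0] by simp
  show "x + y \<in> S'" if xy: "x \<in> S'" "y \<in> S'" for x y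
  proof -
    obtain s j s' j' where "s \<in> S" "s' \<in> S" "x = s + of_nat j * a" "y = s' + of_nat j' * a"
      using xy unfolding S'_eq by blast
    then have "x + y = (s + s') + of_nat (j + j') * a" "s + s' \<in> S"
      using add by (simp_all add: algebra_simps)
    then show ?thesis using mem by presburger
  qed
  show "S \<subset> S'" using mem[of _ 0] mem[OF zero, of 1] \<open>a \<notin> S\<close> by force
  have "inj_on (\<lambda>(s, j). s + of_nat j * a) (S \<times> {..<p})"
  proof (rule inj_onI, clarsimp)
    fix s s' j j'
    assume *: "s \<in> S" "s' \<in> S" "j < p" "j' < p" "s + of_nat j * a = s' + of_nat j' * a"
    have "j' = j"
      by (rule additive_submonoid_cosets_disjoint[OF zero add \<open>a \<notin> S\<close> *(1,2) _ _ *(5)])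
        (use *(3,4) in \<open>simp_all add: p_def\<close>)
    with * show "s = s' \<and> j = j'" by simp
  qed
  then show "card S' = CHAR('a) * card S"
    unfolding S'_def p_def[symmetric] by (simp add: card_image card_cartesian_product)
qed

lemma card_finite_field_eq_CHAR_power: "\<exists>r. CHAR('a) ^ r = CARD('a::{field,finite})"
proof -
  have "\<exists>r. CHAR('a) ^ r = CARD('a)"
    if "0 \<in> S" "\<And>x y. x \<in> S \<Longrightarrow> y \<in> S \<Longrightarrow> x + y \<in> S" "card S = CHAR('a) ^ k"
    for S :: "'a set" and k
    using that
  proof (induction "CARD('a) - card S" arbitrary: S k rule: less_induct)
    case less
    show ?case
    proof (cases "S = UNIV")
      case True
      with less.prems(3) show ?thesis by auto
    next
      case False
      then obtain a where "a \<notin> S" by blast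
      note S' = card_additive_submonoid_insert[OF less.prems(1,2) this]
      let ?S' = "(\<lambda>(s, j). s + of_nat j * a) ` (S \<times> {..<CHAR('a)})"
      have "card S < card ?S'" using S'(3) by (intro psubset_card_mono) auto
      moreover have "card ?S' \<le> CARD('a)" by (rule card_mono) auto
      ultimately have "CARD('a) - card ?S' < CARD('a) - card S" by linarith
      moreover have "card ?S' = CHAR('a) ^ Suc k" using S'(4) less.prems(3) by simp
      ultimately show ?thesis using less.hyps S'(1,2) by blast
    qed
  qed
  from this[of "{0}" 0] show ?thesis by simp
qed

lemma CHAR_power_fdeg: "CHAR('a) ^ fdeg TYPE('a) = CARD('a::{field,finite})"
proof -
  have "\<exists>!r. CHAR('a) ^ r = CARD('a)"
    using card_finite_field_eq_CHAR_power CHAR_finite_field_gt_1[where 'a='a]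
    by (metis power_inject_exp)
  then show ?thesis unfolding fdeg_def by (rule theI')
qed

lemma fdeg_pos: "fdeg TYPE('a::{field,finite}) > 0"
proof (rule ccontr)
  assume "\<not> ?thesis"
  then have "CARD('a) = 1" using CHAR_power_fdeg[where 'a='a] by simp
  moreover have "card {0::'a, 1} \<le> CARD('a)" by (rule card_mono) auto
  ultimately show False by simp
qed

lemma ftrace_add: "ftrace (x + y :: 'a::{field,finite}) = ftrace x + ftrace y"
  unfolding ftrace_def by (simp add: sum.distrib freshmans_dream'[OF prime_CHAR_finite_field refl])

lemma ftrace_zero: "ftrace (0::'a::{field,finite}) = 0"
  using ftrace_add[of "0::'a" 0] by (metis add.right_neutral add_left_cancel)

lemma ftrace_power_CHAR: "ftrace (x :: 'a::{field,finite}) ^ CHAR('a) = ftrace x"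
proof -
  define r where "r = fdeg TYPE('a)"
  define g where "g i = x ^ (CHAR('a) ^ i)" for i
  have "ftrace x ^ CHAR('a) = (\<Sum>i<r. g i ^ CHAR('a))"
    unfolding ftrace_def r_def[symmetric] g_def
    by (rule freshmans_dream_sum[OF prime_CHAR_finite_field refl])
  also have "\<dots> = (\<Sum>i<r. g (Suc i))"
    by (simp add: g_def power_mult[symmetric] mult.commute)
  also have "\<dots> = (\<Sum>i<r. g i)"
  proof -
    have "g r = g 0" by (simp add: g_def r_def CHAR_power_fdeg power_card_finite_field)
    then show ?thesis using sum.lessThan_Suc_shift[of g r] by (simp add: add.commute)
  qed
  finally show ?thesis unfolding ftrace_def r_def g_def .
qed

lemma of_nat_power_CHAR: "(of_nat k :: 'a::{field,finite}) ^ CHAR('a) = of_nat k"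
proof (induction k)
  case (Suc k)
  then show ?case
    using freshmans_dream[OF prime_CHAR_finite_field refl, of "of_nat k :: 'a" 1]
    by (simp add: add.commute)
qed (use CHAR_finite_field_gt_1[where 'a='a] in simp)

(* X^p - X has at most p roots, and the p elements of the prime field are among them. *)
lemma power_CHAR_eq_self_imp_of_nat:
  assumes "(y :: 'a::{field,finite}) ^ CHAR('a) = y"
  shows "\<exists>k. of_nat k = y"
proof (rule ccontr)
  assume not_of_nat: "\<nexists>k. of_nat k = y"
  define p where "p = CHAR('a)"
  have p1: "p > 1" using CHAR_finite_field_gt_1 p_def by auto
  define P where "P = monom (1::'a) p - [:0, 1:]"
  have "coeff P p = 1" unfolding P_def using p1 by (simp add: coeff_pCons split: nat.split)
  then have "P \<noteq> 0" by auto
  have "degree P \<le> p"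
    unfolding P_def using p1 by (intro degree_diff_le) (auto simp: degree_monom_le)
  have "insert y (of_nat ` {..<p}) \<subseteq> {x. poly P x = 0}"
    using assms of_nat_power_CHAR[where 'a='a] unfolding P_def p_def by (auto simp: poly_monom)
  moreover have "card (insert y (of_nat ` {..<p})) = Suc p"
  proof -
    have "inj_on (of_nat :: nat \<Rightarrow> 'a) {..<p}"
      by (rule inj_onI) (use of_nat_eq_iff_below_CHAR p_def in auto)
    then show ?thesis using not_of_nat by (subst card_insert_disjoint) (auto simp: card_image)
  qed
  ultimately have "Suc p \<le> card {x. poly P x = 0}" by (metis card_mono finite)
  also have "\<dots> \<le> p" using card_poly_roots_bound[OF \<open>P \<noteq> 0\<close>] \<open>degree P \<le> p\<close> by simp
  finally show False by simp
qed

lemma ex_of_nat_eq_ftrace: "\<exists>k. of_nat k = ftrace (x :: 'a::{field,finite})"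
  by (rule power_CHAR_eq_self_imp_of_nat[OF ftrace_power_CHAR])

(* The trace is a polynomial function of degree p^(r-1) < q. *)
lemma ftrace_not_identically_zero: "\<exists>x::'a::{field,finite}. ftrace x \<noteq> 0"
proof (rule ccontr)
  assume no_nonzero: "\<nexists>x::'a. ftrace x \<noteq> 0"
  define p where "p = CHAR('a)"
  define r where "r = fdeg TYPE('a)"
  have p1: "p > 1" using CHAR_finite_field_gt_1 p_def by auto
  have r0: "r > 0" using fdeg_pos r_def by auto
  define T where "T = (\<Sum>i<r. monom (1::'a) (p ^ i))"
  have poly_T: "poly T x = ftrace x" for x
    unfolding T_def ftrace_def r_def p_def by (simp add: poly_sum poly_monom)
  have inj: "p ^ i = p ^ j \<longleftrightarrow> i = j" for i j using p1 by simp
  have "coeff T (p ^ (r - 1)) = (\<Sum>i<r. if i = r - 1 then 1 else 0)"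
    unfolding T_def coeff_sum coeff_monom by (intro sum.cong) (auto simp: inj)
  also have "\<dots> = 1" using r0 by simp
  finally have "T \<noteq> 0" by auto
  have "degree T \<le> p ^ (r - 1)"
  proof (rule degree_le, intro allI impI)
    fix n assume n: "p ^ (r - 1) < n"
    have "p ^ i \<noteq> n" if "i < r" for i
      using n power_increasing[of i "r - 1" p] that p1 by auto
    then show "coeff T n = 0" unfolding T_def coeff_sum coeff_monom by simp
  qed
  also have "\<dots> < p ^ r" using p1 r0 by (intro power_strict_increasing) auto
  also have "\<dots> = CARD('a)" using CHAR_power_fdeg p_def r_def by auto
  finally have "degree T < CARD('a)" .
  moreover have "{x::'a. poly T x = 0} = UNIV" using no_nonzero poly_T by auto
  ultimately show False using card_poly_roots_bound[OF \<open>T \<noteq> 0\<close>] by simp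
qed

lemma cis_2pi_mod: "cis (2 * pi * real (n mod p) / real p) = cis (2 * pi * real n / real p)"
proof (cases "p = 0")
  case False
  have "real n = real (n mod p) + real p * real (n div p)"
    by (metis of_nat_add of_nat_mult mod_mult_div_eq)
  then have "2 * pi * real n / real p = 2 * pi * real (n mod p) / real p + 2 * pi * real (n div p)"
    using False by (simp add: field_simps)
  then show ?thesis by (simp flip: cis_mult)
qed simp

lemma addchar_eq_cis:
  assumes "of_nat k = ftrace (x :: 'a::{field,finite})"
  shows "addchar x = cis (2 * pi * real k / real CHAR('a))"
proof -
  have k_mod: "k mod CHAR('a) < CHAR('a)" "of_nat (k mod CHAR('a)) = ftrace x"
    using CHAR_finite_field_gt_1[where 'a='a] assms by (simp_all add: of_nat_mod_CHAR)
  have "(THE j. j < CHAR('a) \<and> of_nat j = ftrace x) = k mod CHAR('a)"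
  proof (rule the_equality)
    fix j assume "j < CHAR('a) \<and> of_nat j = ftrace x"
    then show "j = k mod CHAR('a)"
      using k_mod of_nat_eq_iff_below_CHAR[where 'a='a, of j "k mod CHAR('a)"] by simp
  qed (use k_mod in simp)
  then show ?thesis unfolding addchar_def Let_def by (simp add: cis_2pi_mod)
qed

lemma addchar_add: "addchar (x + y :: 'a::{field,finite}) = addchar x * addchar y"
proof -
  obtain k l where k: "of_nat k = ftrace x" and l: "of_nat l = ftrace y"
    using ex_of_nat_eq_ftrace by metis
  have "addchar (x + y) = cis (2 * pi * real (k + l) / real CHAR('a))"
    by (rule addchar_eq_cis) (simp add: k l ftrace_add)
  also have "\<dots> = cis (2 * pi * real k / real CHAR('a)) * cis (2 * pi * real l / real CHAR('a))"
    by (simp add: cis_mult add_divide_distrib distrib_left)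
  finally show ?thesis by (simp add: addchar_eq_cis[OF k] addchar_eq_cis[OF l])
qed

lemma addchar_zero: "addchar (0 :: 'a::{field,finite}) = 1"
  using addchar_eq_cis[of 0 "0::'a"] by (simp add: ftrace_zero)

lemma norm_addchar: "norm (addchar (x :: 'a::{field,finite})) = 1"
  using ex_of_nat_eq_ftrace[of x] addchar_eq_cis by force

lemma addchar_uminus: "addchar (- x :: 'a::{field,finite}) = cnj (addchar x)"
proof -
  have "addchar x * addchar (- x) = 1"
    by (simp flip: addchar_add add: addchar_zero)
  moreover have "addchar x * cnj (addchar x) = 1"
    using complex_norm_square[of "addchar x"] by (simp add: norm_addchar)
  ultimately show ?thesis
    by (metis mult.commute mult.left_neutral mult.assoc)
qed

lemma addchar_sum: "addchar (\<Sum>i\<in>I. f i :: 'a::{field,finite}) = (\<Prod>i\<in>I. addchar (f i))"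
  by (induction I rule: infinite_finite_induct) (auto simp: addchar_zero addchar_add)

lemma addchar_nontrivial: "\<exists>x::'a::{field,finite}. addchar x \<noteq> 1"
proof -
  define p where "p = CHAR('a)"
  have p0: "p > 0" using CHAR_finite_field_gt_1[where 'a='a] p_def by simp
  obtain x :: 'a where x: "ftrace x \<noteq> 0" using ftrace_not_identically_zero by blast
  obtain k where "of_nat k = ftrace x" using ex_of_nat_eq_ftrace by blast
  then have j: "of_nat (k mod p) = ftrace x" by (simp add: p_def of_nat_mod_CHAR)
  define j where "j = k mod p"
  have "0 < j" "j < p" using j x p0 by (auto simp: j_def intro!: Nat.gr0I)
  have "addchar x \<noteq> 1"
  proof
    assume "addchar x = 1"
    then have "cos (2 * pi * real j / real p) = 1"
      using addchar_eq_cis[OF j] unfolding j_def p_def by (metis cis.sel(1) one_complex.sel(1))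
    then obtain n :: int where "2 * pi * real j / real p = real_of_int n * 2 * pi"
      using cos_one_2pi_int by blast
    then have "real j = real_of_int n * real p" using p0 by (simp add: field_simps)
    then have "int j = n * int p" by (metis of_int_eq_iff of_int_mult of_int_of_nat_eq)
    moreover have "n * int p \<le> 0 \<or> int p \<le> n * int p"
      by (cases "n \<le> 0") (simp_all add: mult_nonpos_nonneg mult_le_cancel_right1)
    ultimately show False using \<open>0 < j\<close> \<open>j < p\<close> by linarith
  qed
  then show ?thesis by blast
qed

lemma sum_addchar_mult:
  "(\<Sum>y\<in>UNIV. addchar (c * y :: 'a::{field,finite})) = (if c = 0 then of_nat CARD('a) else 0)"
proof (cases "c = 0")
  case False
  obtain x0 :: 'a where x0: "addchar x0 \<noteq> 1" using addchar_nontrivial by blast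
  define S where "S = (\<Sum>y\<in>UNIV. addchar (y::'a))"
  have "S = (\<Sum>y\<in>UNIV. addchar (y + x0))"
    unfolding S_def by (rule sum.reindex_bij_witness[of _ "\<lambda>y. y + x0" "\<lambda>y. y - x0"]) auto
  also have "\<dots> = S * addchar x0" by (simp add: S_def addchar_add sum_distrib_right)
  finally have "S = 0" using x0 by (simp add: algebra_simps)
  moreover have "(\<Sum>y\<in>UNIV. addchar (c * y)) = S"
    unfolding S_def by (rule sum.reindex_bij_witness[of _ "\<lambda>y. y / c" "\<lambda>y. c * y"]) (use False in auto)
  ultimately show ?thesis using False by simp
qed (simp add: addchar_zero)

lemma two_neq_zero_if_CHAR_neq_2:
  assumes "CHAR('a::{field,finite}) \<noteq> 2"
  shows "(2::'a) \<noteq> 0"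
proof
  assume "(2::'a) = 0"
  then have "(of_nat 2 :: 'a) = 0" by simp
  then have "CHAR('a) dvd 2" by (simp only: of_nat_eq_0_iff_char_dvd)
  then have "CHAR('a) \<le> 2" by (rule dvd_imp_le) simp
  with assms CHAR_finite_field_gt_1[where 'a='a] show False by linarith
qed

lemma qchar_eq_0_iff [simp]: "qchar x = 0 \<longleftrightarrow> x = 0"
  by (simp add: qchar_def)

lemma qchar_zero [simp]: "qchar 0 = 0"
  by (simp add: qchar_def)

lemma qchar_eq_1_iff: "qchar x = 1 \<longleftrightarrow> (\<exists>c. c \<noteq> 0 \<and> x = c ^ 2)"
proof
  assume "qchar x = 1"
  then have "x \<noteq> 0" "\<exists>y. y ^ 2 = x" by (auto simp: qchar_def split: if_splits)
  then show "\<exists>c. c \<noteq> 0 \<and> x = c ^ 2" by fastforce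
qed (auto simp: qchar_def)

lemma qchar_power2 [simp]: "(c :: 'a::{field,finite}) \<noteq> 0 \<Longrightarrow> qchar (c ^ 2) = 1"
  by (auto simp: qchar_def)

lemma qchar_cases: "qchar x = 0 \<or> qchar x = 1 \<or> qchar x = -1"
  by (simp add: qchar_def)

lemma card_square_roots:
  assumes "CHAR('a::{field,finite}) \<noteq> 2"
  shows "int (card {t::'a. t ^ 2 = u}) = 1 + qchar u"
proof (cases "\<exists>y. y ^ 2 = u")
  case True
  then obtain y where y: "y ^ 2 = u" by blast
  show ?thesis
  proof (cases "u = 0")
    case False
    then have "y \<noteq> 0" using y by auto
    then have "- y \<noteq> y" using two_neq_zero_if_CHAR_neq_2[OF assms] by (metis mult_2 add_eq_0_iff2 mult_eq_0_iff)
    moreover have "{t. t ^ 2 = u} = {y, - y}" using y by (auto simp: power2_eq_iff)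
    ultimately show ?thesis using False y by (auto simp: qchar_def)
  qed (auto simp: qchar_def)
next
  case False
  then show ?thesis by (auto simp: qchar_def)
qed

lemma sum_power2_reindex:
  fixes f :: "'a::{field,finite} \<Rightarrow> 'b::comm_ring_1"
  assumes "CHAR('a) \<noteq> 2"
  shows "(\<Sum>t\<in>UNIV. f (t ^ 2)) = (\<Sum>u\<in>UNIV. (1 + of_int (qchar u)) * f u)"
proof -
  have "(\<Sum>t\<in>UNIV. f (t ^ 2)) = (\<Sum>u\<in>UNIV. \<Sum>t | t ^ 2 = u. f (t ^ 2))"
    using sum.group[where S=UNIV and T=UNIV and g="\<lambda>t. t ^ 2" and h="\<lambda>t. f (t ^ 2)"] by simp
  also have "\<dots> = (\<Sum>u\<in>UNIV. of_nat (card {t::'a. t ^ 2 = u}) * f u)"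
    by (simp add: sum_constant_scale)
  also have "\<dots> = (\<Sum>u\<in>UNIV. (1 + of_int (qchar u)) * f u)"
  proof -
    have "(of_nat (card {t::'a. t ^ 2 = u}) :: 'b) = 1 + of_int (qchar u)" for u
      using arg_cong[where f="of_int :: int \<Rightarrow> 'b", OF card_square_roots[OF assms, of u]] by simp
    then show ?thesis by simp
  qed
  finally show ?thesis .
qed

lemma sum_qchar_UNIV:
  assumes "CHAR('a::{field,finite}) \<noteq> 2"
  shows "(\<Sum>u\<in>UNIV. qchar (u :: 'a)) = 0"
  using sum_power2_reindex[OF assms, of "\<lambda>_. 1 :: int"] by (simp add: sum.distrib)

lemma card_squares_eq_card_nonsquares:
  assumes "CHAR('a::{field,finite}) \<noteq> 2"
  shows "card {u::'a. qchar u = 1} = card {u::'a. qchar u = -1}"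
proof -
  have "(\<Sum>u\<in>UNIV. qchar (u::'a)) = (\<Sum>u\<in>{u::'a. qchar u = 1} \<union> {u. qchar u = -1}. qchar u)"
    by (rule sum.mono_neutral_right) (auto simp: qchar_def)
  also have "\<dots> = int (card {u::'a. qchar u = 1}) - int (card {u::'a. qchar u = -1})"
    by (subst sum.union_disjoint) auto
  finally show ?thesis using sum_qchar_UNIV[OF assms] by simp
qed

lemma qchar_power2_mult: "(c :: 'a::{field,finite}) \<noteq> 0 \<Longrightarrow> qchar (c ^ 2 * x) = qchar x"
proof -
  assume "c \<noteq> 0"
  have "(\<exists>y. y ^ 2 = c ^ 2 * x) \<longleftrightarrow> (\<exists>y. y ^ 2 = x)"
  proof
    assume "\<exists>y. y ^ 2 = c ^ 2 * x"
    then obtain y where "y ^ 2 = c ^ 2 * x" ..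
    then have "(y / c) ^ 2 = x" using \<open>c \<noteq> 0\<close> by (simp add: power_divide)
    then show "\<exists>y. y ^ 2 = x" ..
  next
    assume "\<exists>y. y ^ 2 = x"
    then obtain y where "y ^ 2 = x" ..
    then have "(c * y) ^ 2 = c ^ 2 * x" by (simp add: power_mult_distrib)
    then show "\<exists>y. y ^ 2 = c ^ 2 * x" ..
  qed
  then show ?thesis using \<open>c \<noteq> 0\<close> by (simp add: qchar_def)
qed

(* Multiplication by a nonsquare maps the squares injectively into the equally many
   nonsquares, hence onto them. *)
lemma qchar_mult_nonsquares:
  assumes "CHAR('a::{field,finite}) \<noteq> 2" "qchar (a :: 'a) = -1" "qchar b = -1"
  shows "qchar (a * b) = 1"
proof -
  let ?Q = "{u::'a. qchar u = 1}" and ?N = "{u::'a. qchar u = -1}"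
  have "a \<noteq> 0" using assms(2) by auto
  have "(\<lambda>u. a * u) ` ?Q \<subseteq> ?N"
  proof clarify
    fix u :: 'a assume "qchar u = 1"
    then obtain c where "c \<noteq> 0" "u = c ^ 2" by (auto simp: qchar_eq_1_iff)
    then show "qchar (a * u) = -1" using assms(2) qchar_power2_mult[of c a] by (simp add: mult.commute)
  qed
  moreover have "card ((\<lambda>u. a * u) ` ?Q) = card ?N"
    using card_squares_eq_card_nonsquares[OF assms(1)] \<open>a \<noteq> 0\<close> by (simp add: card_image inj_on_def)
  ultimately have "(\<lambda>u. a * u) ` ?Q = ?N" by (intro card_subset_eq) auto
  then obtain u where "qchar u = 1" "b = a * u" using assms(3) by blast
  then obtain c where "c \<noteq> 0" "b = a * c ^ 2" by (auto simp: qchar_eq_1_iff)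
  then have "a * b = (a * c) ^ 2" by (simp add: power2_eq_square)
  then show ?thesis using \<open>a \<noteq> 0\<close> \<open>c \<noteq> 0\<close> by simp
qed

lemma qchar_mult:
  assumes "CHAR('a::{field,finite}) \<noteq> 2"
  shows "qchar ((a :: 'a) * b) = qchar a * qchar b"
proof -
  have square: "qchar (x * y) = qchar y" if x: "qchar x = 1" for x y :: 'a
  proof -
    obtain c where "c \<noteq> 0" "x = c ^ 2" using x by (auto simp: qchar_eq_1_iff)
    then show ?thesis by (simp add: qchar_power2_mult)
  qed
  consider "a = 0 \<or> b = 0" | "qchar a = 1" | "qchar b = 1" | "qchar a = -1" "qchar b = -1"
    using qchar_cases[of a] qchar_cases[of b] by auto
  then show ?thesis
  proof cases
    case 3
    then show ?thesis using square[of b a] by (simp add: mult.commute)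
  qed (auto simp: square qchar_mult_nonsquares[OF assms])
qed

lemma qchar_inverse: "qchar (inverse (a :: 'a::{field,finite})) = qchar a"
proof (cases "a = 0")
  case False
  then have "inverse a = inverse a ^ 2 * a" by (simp add: power2_eq_square)
  then have "qchar (inverse a) = qchar (inverse a ^ 2 * a)" by (rule arg_cong)
  also have "\<dots> = qchar a" by (rule qchar_power2_mult) (simp add: False)
  finally show ?thesis .
qed simp

abbreviation eta :: "'a::{field,finite} \<Rightarrow> complex" where
  "eta x \<equiv> of_int (qchar x)"

lemma eta_square: "(a :: 'a::{field,finite}) \<noteq> 0 \<Longrightarrow> eta a * eta a = 1"
  by (auto simp: qchar_def)

lemma gauss1_eq_sum_UNIV: "gauss1 TYPE('a) = (\<Sum>s\<in>UNIV. eta (s::'a::{field,finite}) * addchar s)"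
  by (simp add: gauss1_def sum.remove[of UNIV 0])

lemma sum_eta_addchar_mult:
  assumes "CHAR('a::{field,finite}) \<noteq> 2"
  shows "(\<Sum>s\<in>UNIV. eta s * addchar (a * s)) = eta (a::'a) * gauss1 TYPE('a)"
proof (cases "a = 0")
  case True
  then show ?thesis using sum_qchar_UNIV[OF assms] by (simp add: addchar_zero flip: of_int_sum)
next
  case False
  have "(\<Sum>s\<in>UNIV. eta s * addchar (a * s)) = (\<Sum>s\<in>UNIV. eta (s / a) * addchar s)"
    by (rule sum.reindex_bij_witness[of _ "\<lambda>s. s / a" "\<lambda>s. a * s"]) (use False in auto)
  also have "\<dots> = (\<Sum>s\<in>UNIV. eta a * (eta (s::'a) * addchar s))"
  proof (rule sum.cong[OF refl])
    fix s :: 'a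
    have "qchar (s / a) = qchar a * qchar s"
      using qchar_mult[OF assms, of s "inverse a"] by (simp add: divide_inverse qchar_inverse mult.commute)
    then show "eta (s / a) * addchar s = eta a * (eta s * addchar s)" by (simp add: mult.assoc)
  qed
  finally show ?thesis by (simp only: gauss1_eq_sum_UNIV sum_distrib_left)
qed

lemma sum_addchar_mult_power2:
  assumes "CHAR('a::{field,finite}) \<noteq> 2" "(s::'a) \<noteq> 0"
  shows "(\<Sum>t\<in>UNIV. addchar (s * t ^ 2)) = eta s * gauss1 TYPE('a)"
proof -
  have "(\<Sum>t\<in>UNIV. addchar (s * t ^ 2)) = (\<Sum>u\<in>UNIV. (1 + eta u) * addchar (s * u))"
    by (rule sum_power2_reindex[OF assms(1)])
  also have "\<dots> = (\<Sum>u\<in>UNIV. addchar (s * u)) + (\<Sum>u\<in>UNIV. eta u * addchar (s * u))"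
    by (simp add: distrib_right sum.distrib)
  finally show ?thesis using assms by (simp add: sum_addchar_mult sum_eta_addchar_mult)
qed

lemma sum_addchar_quadratic:
  assumes "CHAR('a::{field,finite}) \<noteq> 2" "(s::'a) \<noteq> 0"
  shows "(\<Sum>t\<in>UNIV. addchar (s * t ^ 2 + b * t))
    = addchar (- (b ^ 2 / (4 * s))) * (eta s * gauss1 TYPE('a))"
proof -
  have "(2::'a) \<noteq> 0" by (rule two_neq_zero_if_CHAR_neq_2[OF assms(1)])
  have four: "(4::'a) = 2 * 2" by simp
  have "(4::'a) \<noteq> 0" unfolding four by (intro no_zero_divisors \<open>2 \<noteq> 0\<close>)
  define c where "c = - b / (2 * s)"
  have linear_coeff: "2 * s * c = - b"
    using \<open>2 \<noteq> 0\<close> assms(2) by (simp add: c_def field_simps)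
  have constant_coeff: "c * (s * c + b) = - (b ^ 2 / (4 * s))"
    using \<open>2 \<noteq> 0\<close> \<open>4 \<noteq> 0\<close> assms(2) by (simp add: c_def field_simps power2_eq_square)
  have complete_square: "s * (t + c) ^ 2 + b * (t + c) = s * t ^ 2 + - (b ^ 2 / (4 * s))" for t
  proof -
    have "s * (t + c) ^ 2 + b * (t + c) = s * t ^ 2 + (2 * s * c + b) * t + c * (s * c + b)"
      by (simp add: power2_eq_square algebra_simps)
    then show ?thesis by (simp add: linear_coeff constant_coeff)
  qed
  have "(\<Sum>t\<in>UNIV. addchar (s * t ^ 2 + b * t)) = (\<Sum>t\<in>UNIV. addchar (s * (t + c) ^ 2 + b * (t + c)))"
    by (rule sum.reindex_bij_witness[of _ "\<lambda>t. t + c" "\<lambda>t. t - c"]) auto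
  also have "\<dots> = (\<Sum>t\<in>UNIV. addchar (s * t ^ 2)) * addchar (- (b ^ 2 / (4 * s)))"
    by (simp only: complete_square addchar_add sum_distrib_right)
  finally show ?thesis by (simp only: sum_addchar_mult_power2[OF assms] mult.commute)
qed

lemma gauss1_square:
  assumes "CHAR('a::{field,finite}) \<noteq> 2"
  shows "gauss1 TYPE('a) ^ 2 = eta (-1::'a) * of_nat CARD('a)"
proof -
  define G where "G = gauss1 TYPE('a)"
  have "G ^ 2 = (\<Sum>s\<in>UNIV. addchar s * (eta (s::'a) * G))"
    by (simp add: G_def power2_eq_square gauss1_eq_sum_UNIV sum_distrib_right mult_ac)
  also have "\<dots> = (\<Sum>s\<in>UNIV. addchar s * (\<Sum>t\<in>UNIV. eta t * addchar (s * t :: 'a)))"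
    by (simp add: G_def sum_eta_addchar_mult[OF assms])
  also have "\<dots> = (\<Sum>s\<in>UNIV. \<Sum>t\<in>UNIV. eta t * addchar ((1 + t) * s :: 'a))"
  proof -
    have "addchar ((1 + t) * s) = addchar s * addchar (s * t)" for s t :: 'a
      by (simp only: distrib_right mult_1_left addchar_add mult.commute[of t s])
    then show ?thesis unfolding sum_distrib_left by (simp add: mult_ac)
  qed
  also have "\<dots> = (\<Sum>t\<in>UNIV. eta t * (\<Sum>s\<in>UNIV. addchar ((1 + t) * s :: 'a)))"
    by (subst sum.swap) (simp add: sum_distrib_left)
  also have "\<dots> = (\<Sum>t\<in>UNIV. if t = -1 then eta (t::'a) * of_nat CARD('a) else 0)"
    by (intro sum.cong refl) (simp add: sum_addchar_mult add_eq_0_iff)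
  finally show ?thesis by (simp add: G_def)
qed

lemma gauss1_nonzero:
  assumes "CHAR('a::{field,finite}) \<noteq> 2"
  shows "gauss1 TYPE('a) \<noteq> 0"
  using gauss1_square[OF assms] by auto

lemma sum_UNIV_vec_prod:
  fixes g :: "'n::finite \<Rightarrow> 'a::finite \<Rightarrow> 'b::comm_semiring_1"
  shows "(\<Sum>m\<in>(UNIV::('a^'n) set). \<Prod>i\<in>UNIV. g i (m $ i)) = (\<Prod>i\<in>UNIV. \<Sum>t\<in>UNIV. g i t)"
proof -
  have "(\<Prod>i\<in>UNIV. \<Sum>t\<in>UNIV. g i t) = (\<Sum>f\<in>PiE UNIV (\<lambda>_. UNIV). \<Prod>i\<in>UNIV. g i (f i))"
    by (rule prod_sum_PiE) auto
  also have "\<dots> = (\<Sum>m\<in>(UNIV::('a^'n) set). \<Prod>i\<in>UNIV. g i (m $ i))"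
    unfolding PiE_UNIV by (rule sum.reindex_bij_witness[of _ vec_nth vec_lambda]) auto
  finally show ?thesis ..
qed

lemma sum_addchar_fnorm_fdot:
  assumes "CHAR('a::{field,finite}) \<noteq> 2" "(s::'a) \<noteq> 0"
  shows "(\<Sum>m\<in>(UNIV::('a^'n::finite) set). addchar (s * fnorm m + fdot m z))
    = addchar (- (fnorm z / (4 * s))) * (eta s * gauss1 TYPE('a)) ^ CARD('n)"
proof -
  have "(\<Sum>m\<in>(UNIV::('a^'n) set). addchar (s * fnorm m + fdot m z))
      = (\<Sum>m\<in>(UNIV::('a^'n) set). \<Prod>i\<in>UNIV. addchar (s * (m $ i) ^ 2 + (z $ i) * (m $ i)))"
    by (simp add: fnorm_def fdot_def sum.distrib sum_distrib_left mult_ac flip: addchar_sum)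
  also have "\<dots> = (\<Prod>i\<in>UNIV. \<Sum>t\<in>UNIV. addchar (s * t ^ 2 + (z $ i) * t))"
    by (rule sum_UNIV_vec_prod)
  also have "\<dots> = (\<Prod>i\<in>(UNIV::'n set). addchar (- ((z $ i) ^ 2 / (4 * s))) * (eta s * gauss1 TYPE('a)))"
    by (simp add: sum_addchar_quadratic[OF assms])
  also have "\<dots> = addchar (- (fnorm z / (4 * s))) * (eta s * gauss1 TYPE('a)) ^ CARD('n)"
    by (simp add: prod.distrib fnorm_def sum_divide_distrib flip: addchar_sum sum_negf)
  finally show ?thesis .
qed

lemma eta_mult_power_even: "even d \<Longrightarrow> eta s * eta s ^ d = eta (s::'a::{field,finite})"
  by (cases "s = 0") (auto elim!: evenE simp: power_mult power2_eq_square eta_square)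

lemma eta_mult_sum_addchar_fnorm_fdot:
  assumes "CHAR('a::{field,finite}) \<noteq> 2" "even CARD('n::finite)"
  shows "eta s * (\<Sum>m\<in>(UNIV::('a^'n) set). addchar (s * fnorm m + fdot m z))
    = gauss1 TYPE('a) ^ CARD('n) * (eta s * addchar (- (fnorm z / 4) * inverse s))"
proof (cases "s = 0")
  case False
  have "- (fnorm z / (4 * s)) = - (fnorm z / 4 / s)"
    by (simp only: divide_divide_eq_left)
  also have "\<dots> = - (fnorm z / 4) * inverse s"
    by (simp only: divide_inverse[of "fnorm z / 4" s] minus_mult_left)
  finally have "- (fnorm z / (4 * s)) = - (fnorm z / 4) * inverse s" .
  then have "eta s * (\<Sum>m\<in>(UNIV::('a^'n) set). addchar (s * fnorm m + fdot m z))
      = eta s * (addchar (- (fnorm z / 4) * inverse s) * (eta s * gauss1 TYPE('a)) ^ CARD('n))"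
    by (simp only: sum_addchar_fnorm_fdot[OF assms(1) False])
  also have "\<dots> = (eta s * eta s ^ CARD('n))
      * (gauss1 TYPE('a) ^ CARD('n) * addchar (- (fnorm z / 4) * inverse s))"
    by (simp add: power_mult_distrib mult_ac)
  finally show ?thesis by (simp add: eta_mult_power_even[OF assms(2)] mult_ac)
qed simp

lemma sum_eta_addchar_mult_inverse:
  assumes "CHAR('a::{field,finite}) \<noteq> 2"
  shows "(\<Sum>s\<in>UNIV. eta s * addchar (a * inverse s)) = eta (a::'a) * gauss1 TYPE('a)"
proof -
  have "(\<Sum>s\<in>UNIV. eta s * addchar (a * inverse s)) = (\<Sum>s\<in>UNIV. eta s * addchar (a * s))"
    by (rule sum.reindex_bij_witness[of _ inverse inverse]) (auto simp: qchar_inverse)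
  then show ?thesis by (simp add: sum_eta_addchar_mult[OF assms])
qed

lemma qchar_uminus_divide_4:
  assumes "CHAR('a::{field,finite}) \<noteq> 2"
  shows "qchar (- (x / 4 :: 'a)) = qchar (-1 :: 'a) * qchar x"
proof -
  have "(2::'a) \<noteq> 0" by (rule two_neq_zero_if_CHAR_neq_2[OF assms])
  then have "qchar (- (x / 4)) = qchar (inverse 2 ^ 2 * (- x))"
    by (simp add: field_simps power2_eq_square)
  also have "\<dots> = qchar (- x)" by (rule qchar_power2_mult) (simp add: \<open>2 \<noteq> 0\<close>)
  also have "\<dots> = qchar (-1 :: 'a) * qchar x" using qchar_mult[OF assms, of "-1" x] by simp
  finally show ?thesis .
qed

lemma sum_eta_fnorm_addchar_fdot:
  assumes "CHAR('a::{field,finite}) \<noteq> 2" "even CARD('n::finite)"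
  shows "(\<Sum>m\<in>(UNIV::('a^'n) set). eta (fnorm m) * addchar (fdot m z))
         = gauss1 TYPE('a) ^ CARD('n) * eta (-1::'a) * eta (fnorm z)"
proof -
  define G where "G = gauss1 TYPE('a)"
  have "G * (\<Sum>m\<in>(UNIV::('a^'n) set). eta (fnorm m) * addchar (fdot m z))
      = (\<Sum>m\<in>(UNIV::('a^'n) set). (eta (fnorm m) * G) * addchar (fdot m z))"
    by (simp add: sum_distrib_left mult_ac)
  also have "\<dots> = (\<Sum>m\<in>(UNIV::('a^'n) set). (\<Sum>s\<in>UNIV. eta s * addchar (fnorm m * s)) * addchar (fdot m z))"
    by (simp only: G_def sum_eta_addchar_mult[OF assms(1)])
  also have "\<dots> = (\<Sum>s\<in>UNIV. \<Sum>m\<in>(UNIV::('a^'n) set). eta s * addchar (s * fnorm m + fdot m z))"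
    unfolding sum_distrib_right by (subst sum.swap) (simp add: addchar_add mult_ac)
  also have "\<dots> = (\<Sum>s\<in>UNIV. eta s * (\<Sum>m\<in>(UNIV::('a^'n) set). addchar (s * fnorm m + fdot m z)))"
    by (simp add: sum_distrib_left)
  also have "\<dots> = (\<Sum>s\<in>UNIV. G ^ CARD('n) * (eta s * addchar (- (fnorm z / 4) * inverse s)))"
    unfolding G_def by (rule sum.cong[OF refl]) (rule eta_mult_sum_addchar_fnorm_fdot[OF assms])
  also have "\<dots> = G ^ CARD('n) * (eta (- (fnorm z / 4)) * G)"
    by (simp only: sum_distrib_left[symmetric] sum_eta_addchar_mult_inverse[OF assms(1)] G_def)
  finally show ?thesis
    using gauss1_nonzero[OF assms(1)] by (simp add: G_def qchar_uminus_divide_4[OF assms(1)] mult_ac)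
qed

lemma fnorm_minus_commute: "fnorm (x - y) = fnorm (y - x)"
  unfolding fnorm_def by (simp add: power2_commute)

lemma norm_fourier_square:
  fixes A :: "('a::{field,finite} ^ 'n::finite) set"
  shows "complex_of_real ((norm (fourier A m))\<^sup>2)
    = (\<Sum>x\<in>A. \<Sum>y\<in>A. addchar (fdot m (y - x))) / (of_nat CARD('a) ^ CARD('n))\<^sup>2"
proof -
  define S where "S = (\<Sum>x\<in>A. addchar (- fdot m x))"
  define Q where "Q = (of_nat CARD('a) ^ CARD('n) :: complex)"
  have "cnj S = (\<Sum>y\<in>A. addchar (fdot m y))"
    by (simp add: S_def flip: addchar_uminus)
  moreover have "addchar (- fdot m x) * addchar (fdot m y) = addchar (fdot m (y - x))" for x y
    by (simp add: fdot_def sum_subtractf right_diff_distrib flip: addchar_add)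
  moreover have "fourier A m = S / Q" unfolding fourier_def S_def Q_def ..
  ultimately show ?thesis
    unfolding complex_norm_square by (simp add: Q_def power2_eq_square S_def sum_product)
qed

lemma OmegaP_minus_OmegaM_eq_sum:
  fixes A :: "('a::{field,finite} ^ 'n::finite) set"
  shows "OmegaP A - OmegaM A = (\<Sum>m\<in>UNIV. of_int (qchar (fnorm m)) * (norm (fourier A m))\<^sup>2)"
proof -
  let ?w = "\<lambda>m. of_int (qchar (fnorm m)) * (norm (fourier A m))\<^sup>2"
  let ?P = "{m::'a^'n. qchar (fnorm m) = 1}" and ?M = "{m::'a^'n. qchar (fnorm m) = -1}"
  have "(\<Sum>m\<in>UNIV. ?w m) = (\<Sum>m\<in>?P \<union> ?M. ?w m)"
    by (rule sum.mono_neutral_right) (auto simp: qchar_def)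
  also have "\<dots> = (\<Sum>m\<in>?P. ?w m) + (\<Sum>m\<in>?M. ?w m)"
    by (rule sum.union_disjoint) auto
  also have "\<dots> = OmegaP A - OmegaM A"
    by (simp add: OmegaP_def OmegaM_def sum_negf)
  finally show ?thesis ..
qed

(* A pair (x, y) contributes (1 + eta(|x - y|))/2: 1 if |x - y| is a nonzero square,
   1/2 if it is zero and 0 otherwise. *)
lemma SQ_plus_half_ZR:
  fixes A :: "('a::{field,finite} ^ 'n::finite) set"
  shows "(of_nat (SQ A) + of_nat (ZR A) / 2 :: 'b::field_char_0)
    = of_nat (card A) ^ 2 / 2 + (\<Sum>x\<in>A. \<Sum>y\<in>A. of_int (qchar (fnorm (x - y)))) / 2"
proof -
  define v where "v p = qchar (fnorm (fst p - snd p))" for p :: "('a^'n) \<times> ('a^'n)"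
  have "SQ A = card (A \<times> A \<inter> {p. v p = 1})" "ZR A = card (A \<times> A \<inter> {p. v p = 0})"
    unfolding SQ_def ZR_def v_def by (auto intro!: arg_cong[where f=card])
  then have "(of_nat (SQ A) :: 'b) = (\<Sum>p\<in>A \<times> A. of_bool (v p = 1))"
    "(of_nat (ZR A) :: 'b) = (\<Sum>p\<in>A \<times> A. of_bool (v p = 0))"
    by simp_all
  then have "(of_nat (SQ A) + of_nat (ZR A) / 2 :: 'b)
      = (\<Sum>p\<in>A \<times> A. of_bool (v p = 1) + of_bool (v p = 0) / 2)"
    by (simp only: sum.distrib sum_divide_distrib)
  also have "\<dots> = (\<Sum>p\<in>A \<times> A. 1 / 2 + of_int (v p) / 2)"
  proof (rule sum.cong[OF refl])
    fix p :: "('a^'n) \<times> ('a^'n)"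
    show "of_bool (v p = 1) + of_bool (v p = 0) / 2 = 1 / 2 + (of_int (v p) :: 'b) / 2"
      using qchar_cases[of "fnorm (fst p - snd p)"] by (auto simp: v_def)
  qed
  also have "\<dots> = of_nat (card A) ^ 2 / 2 + (\<Sum>x\<in>A. \<Sum>y\<in>A. of_int (qchar (fnorm (x - y)))) / 2"
    by (simp add: sum.distrib sum_divide_distrib card_cartesian_product power2_eq_square
        sum.cartesian_product v_def split_beta)
  finally show ?thesis .
qed

lemma OmegaP_minus_OmegaM_mult_card_power2:
  fixes A :: "('a::{field,finite} ^ 'n::finite) set"
  assumes "CHAR('a) \<noteq> 2" "even CARD('n)"
  shows "complex_of_real (OmegaP A - OmegaM A) * (of_nat CARD('a) ^ CARD('n))\<^sup>2
    = gauss1 TYPE('a) ^ CARD('n) * eta (-1::'a) * (\<Sum>x\<in>A. \<Sum>y\<in>A. eta (fnorm (x - y)))"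
proof -
  define Q where "Q = (of_nat CARD('a) ^ CARD('n) :: complex)\<^sup>2"
  have "complex_of_real (OmegaP A - OmegaM A)
      = (\<Sum>m\<in>UNIV. \<Sum>x\<in>A. \<Sum>y\<in>A. eta (fnorm m) * addchar (fdot m (y - x))) / Q"
    unfolding OmegaP_minus_OmegaM_eq_sum of_real_sum of_real_mult of_real_of_int_eq norm_fourier_square
    by (simp add: Q_def sum_distrib_left sum_divide_distrib)
  also have "\<dots> = (\<Sum>x\<in>A. \<Sum>y\<in>A. \<Sum>m\<in>UNIV. eta (fnorm m) * addchar (fdot m (y - x))) / Q"
    by (simp add: sum.swap[of _ UNIV])
  also have "\<dots> = gauss1 TYPE('a) ^ CARD('n) * eta (-1::'a) * (\<Sum>x\<in>A. \<Sum>y\<in>A. eta (fnorm (x - y))) / Q"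
  proof -
    have "(\<Sum>m\<in>UNIV. eta (fnorm m) * addchar (fdot m (y - x)))
        = gauss1 TYPE('a) ^ CARD('n) * eta (-1::'a) * eta (fnorm (x - y))" for x y :: "'a^'n"
      using sum_eta_fnorm_addchar_fdot[OF assms, of "y - x"] fnorm_minus_commute[of y x] by simp
    then show ?thesis by (simp add: sum_distrib_left)
  qed
  finally show ?thesis by (simp add: Q_def)
qed

lemma gauss1_power_even:
  assumes "CHAR('a::{field,finite}) \<noteq> 2" "even n"
  shows "gauss1 TYPE('a) ^ n = (eta (-1::'a) * of_nat CARD('a)) ^ (n div 2)"
  using assms(2) by (elim evenE) (simp add: power_mult gauss1_square[OF assms(1)])

lemma eta_power_even: "(s :: 'a::{field,finite}) \<noteq> 0 \<Longrightarrow> even n \<Longrightarrow> eta s ^ n = 1"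
  by (elim evenE) (simp add: power_mult power2_eq_square eta_square)

lemma scaled_Omega_difference_eq_sum_eta:
  fixes A :: "('a::{field,finite} ^ 'n::finite) set"
  assumes "CHAR('a) \<noteq> 2" "even CARD('n)"
  shows "of_nat CARD('a) ^ (CARD('n) - 1) * gauss1 TYPE('a) ^ (CARD('n) + 2)
      * complex_of_real (OmegaP A - OmegaM A) = (\<Sum>x\<in>A. \<Sum>y\<in>A. eta (fnorm (x - y)))"
proof -
  define q where "q = (of_nat CARD('a) :: complex)"
  define d where "d = CARD('n)"
  define G where "G = gauss1 TYPE('a)"
  define e where "e = eta (-1::'a)"
  define T where "T = (\<Sum>x\<in>A. \<Sum>y\<in>A. eta (fnorm (x - y)))"
  have "d > 0" by (simp add: d_def)
  have "G ^ (d + 2) * (G ^ d * e) = G ^ (2 * (d + 1)) * e"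
    by (simp add: power_add[symmetric] mult.assoc mult_2)
  also have "\<dots> = (e * q) ^ (d + 1) * e"
    unfolding G_def e_def q_def by (subst gauss1_power_even[OF assms(1)]) simp_all
  also have "\<dots> = e ^ (d + 2) * q ^ (d + 1)"
    by (simp add: power_mult_distrib)
  also have "e ^ (d + 2) = 1"
    unfolding e_def by (rule eta_power_even) (use assms(2) in \<open>simp_all add: d_def\<close>)
  finally have gauss_powers: "G ^ (d + 2) * (G ^ d * e) = q ^ (d + 1)" by simp
  have "(q ^ (d - 1) * G ^ (d + 2) * complex_of_real (OmegaP A - OmegaM A)) * (q ^ d)\<^sup>2
      = q ^ (d - 1) * (G ^ (d + 2) * (G ^ d * e)) * T"
    using OmegaP_minus_OmegaM_mult_card_power2[OF assms, of A]
    by (simp add: q_def d_def G_def e_def T_def mult_ac)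
  also have "\<dots> = q ^ (d - 1) * q ^ (d + 1) * T"
    by (simp only: gauss_powers)
  also have "\<dots> = q ^ (d - 1 + (d + 1)) * T"
    by (simp only: power_add)
  also have "d - 1 + (d + 1) = d * 2"
    using \<open>d > 0\<close> by simp
  finally have "(q ^ (d - 1) * G ^ (d + 2) * complex_of_real (OmegaP A - OmegaM A)) * (q ^ d)\<^sup>2
      = (q ^ d)\<^sup>2 * T"
    by (simp only: power_mult)
  then show ?thesis
    by (simp add: q_def d_def G_def T_def mult_ac)
qed

lemma card_power_mult_gauss1_power_mod_4:
  assumes "CHAR('a::{field,finite}) \<noteq> 2" "d mod 4 = 2"
  shows "of_nat CARD('a) ^ (d - 1) * gauss1 TYPE('a) ^ (d + 2)
    = complex_of_real (real CARD('a) ^ (3 * d div 2))"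
proof -
  obtain k where d: "d = 4 * k + 2"
    using assms(2) div_mult_mod_eq[of d 4] by (metis mult.commute)
  have "even (d + 2)" "even ((d + 2) div 2)" by (simp_all add: d)
  have "gauss1 TYPE('a) ^ (d + 2) = (eta (-1::'a) * of_nat CARD('a)) ^ ((d + 2) div 2)"
    by (rule gauss1_power_even[OF assms(1) \<open>even (d + 2)\<close>])
  also have "eta (-1::'a) ^ ((d + 2) div 2) = 1"
    by (rule eta_power_even[OF _ \<open>even ((d + 2) div 2)\<close>]) simp
  then have "(eta (-1::'a) * of_nat CARD('a)) ^ ((d + 2) div 2) = of_nat CARD('a) ^ ((d + 2) div 2)"
    by (simp only: power_mult_distrib mult_1_left)
  finally have "of_nat CARD('a) ^ (d - 1) * gauss1 TYPE('a) ^ (d + 2)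
      = of_nat CARD('a) ^ (d - 1 + (d + 2) div 2)"
    by (simp only: power_add)
  also have "d - 1 + (d + 2) div 2 = 3 * d div 2" by (simp add: d)
  finally show ?thesis by simp
qed

theorem proposition3p3:
  fixes A :: "('a::{field,finite} ^ 'n) set"
  assumes "CHAR('a) \<noteq> 2"
    and "even CARD('n)" and "CARD('n) \<ge> 2"
  shows "(of_nat (SQ A) + of_nat (ZR A) / 2 =
           of_nat (card A) ^ 2 / 2
           + of_nat CARD('a) ^ (CARD('n) - 1) * gauss1 TYPE('a) ^ (CARD('n) + 2) / 2 * of_real (OmegaP A)
           - of_nat CARD('a) ^ (CARD('n) - 1) * gauss1 TYPE('a) ^ (CARD('n) + 2) / 2 * of_real (OmegaM A)) \<and>
         (CARD('n) mod 4 = 2 \<longrightarrow>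
         real (SQ A) + real (ZR A) / 2 =
           real (card A) ^ 2 / 2
           + real CARD('a) ^ (3 * CARD('n) div 2) / 2 * OmegaP A
           - real CARD('a) ^ (3 * CARD('n) div 2) / 2 * OmegaM A)"
  (is "?identity \<and> (_ \<longrightarrow> ?real_identity)")
proof (intro conjI impI)
  show ?identity
    unfolding SQ_plus_half_ZR scaled_Omega_difference_eq_sum_eta[OF assms(1,2), symmetric] of_real_diff
    by (simp add: field_simps)
  assume "CARD('n) mod 4 = 2"
  note identity = \<open>?identity\<close>[unfolded card_power_mult_gauss1_power_mod_4[OF assms(1) this]]
  show ?real_identity
    by (rule of_real_eq_iff[where 'a=complex, THEN iffD1]) (use identity in simp)
qed

end
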